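(* Let $J\subseteq\Sigma$ and $c\in\mathbf{Z}^\Sigma$ with $c_\tau\in[1,p-1]$ for all $\tau$. Then $r=r(J,c)$ (defined using any admissible choice of $\tau_0$, if a choice is needed) satisfies $r_\tau\in[1,p]$ for all $\tau\in\Sigma$ and, for every $\tau\in\Sigma$, \[\sum_{i=0}^{f-1}(-1)^{\tau\circ\varphi^i\notin J}\,r_{\tau\circ\varphi^i}\,p^i\equiv\Omega_{\tau,c}\pmod{p^f-1}.\]
   Context: Let $p$ be a prime, $k$ a finite field of degree $f$ over $\mathbf{F}_p$, $\Sigma=\mathrm{Hom}_{\mathbf{F}_p}(k,\overline{\mathbf{F}}_p)$, $\varphi(x)=x^p$ on $k$ (so $\Sigma=\{\tau\circ\varphi^i:0\le i<f\}$). For $a\in\mathbf{Z}^\Sigma$, $\Omega_{\tau,a}=\sum_{i=0}^{f-1}p^ia_{\tau\circ\varphi^i}$. For $J\subseteq\Sigma$, $(-1)^{\tau\notin J}$ is $-1$ if $\tau\notin J$ and $1$ if $\tau\in J$. The map $\delta_J\colon\mathbf{Z}^\Sigma\times\Sigma\to\mathbf{Z}^\Sigma$: given $(x,\tau)$, let $y=\delta_J(x,\tau)$. If $1\le x_\tau\le p$, $y=x$. If $x_\tau\le0$: $y_\tau=x_\tau+p$, $y_{\tau\circ\varphi}=x_{\tau\circ\varphi}-1$ if $\tau\circ\varphi\notin J$ and $x_{\tau\circ\varphi}+1$ if $\tau\circ\varphi\in J$, and $y_\kappa=x_\kappa$ for other $\kappa$. If $x_\tau>p$: $y_\tau=x_\tau-p$,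 $y_{\tau\circ\varphi}=x_{\tau\circ\varphi}-1$ if $\tau\circ\varphi\notin J$ and $x_{\tau\circ\varphi}+1$ if $\tau\circ\varphi\in J$, and $y_\kappa=x_\kappa$ for other $\kappa$. The vector $r(J,c)$ for $c_\tau\in[1,p-1]$: define $y_0\in\mathbf{Z}^\Sigma$ by $y_{0,\tau}=c_\tau$ if $\tau\in J,\tau\circ\varphi^{-1}\in J$; $c_\tau+1$ if $\tau\in J,\tau\circ\varphi^{-1}\notin J$; $p-c_\tau$ if $\tau\notin J,\tau\circ\varphi^{-1}\in J$; $p-1-c_\tau$ if $\tau\notin J,\tau\circ\varphi^{-1}\notin J$. If $y_{0,\tau}>0$ for all $\tau$, $r(J,c)=y_0$. Otherwise choose $\tau_0$ with $y_{0,\tau_0}=0$, define $y_\kappa=\delta_J(y_{\kappa-1},\tau_0\circ\varphi^{\kappa-1})$ for $\kappa=1,\dots,f$, and set $r(J,c)=y_f$. *)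

theory Defs
  imports "HOL-Computational_Algebra.Primes"
begin

text \<open>Model: fix an embedding tau_base; the elements of Sigma are indexed by
  i in {0..<f}, index i standing for tau_base o phi^i. Then
  (index i) o phi = index ((i+1) mod f), and tau o phi^j = index ((i+j) mod f).
  Vectors in Z^Sigma are functions nat => int (only values on {0..<f} matter);
  subsets J of Sigma are sets of indices J <= {0..<f}.\<close>

definition nxt :: "nat \<Rightarrow> nat \<Rightarrow> nat" where
  "nxt f i = (i + 1) mod f"

definition prv :: "nat \<Rightarrow> nat \<Rightarrow> nat" where
  "prv f i = (i + f - 1) mod f"

definition sgnJ :: "nat set \<Rightarrow> nat \<Rightarrow> int" where
  "sgnJ J t = (if t \<in> J then 1 else -1)"

definition Omega :: "nat \<Rightarrow> nat \<Rightarrow> (nat \<Rightarrow> int) \<Rightarrow> nat \<Rightarrow> int" where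
  "Omega p f a t = (\<Sum>i<f. int p ^ i * a ((t + i) mod f))"

text \<open>The two changes
  are applied additively (relevant only when tau o phi = tau, i.e. f = 1).\<close>
definition delta :: "nat \<Rightarrow> nat \<Rightarrow> nat set \<Rightarrow> (nat \<Rightarrow> int) \<Rightarrow> nat \<Rightarrow> (nat \<Rightarrow> int)" where
  "delta p f J x t =
     (if 1 \<le> x t \<and> x t \<le> int p then x
      else (\<lambda>k. x k
               + (if k = t then (if x t \<le> 0 then int p else - int p) else 0)
               + (if k = nxt f t then sgnJ J (nxt f t) else 0)))"

definition y0 :: "nat \<Rightarrow> nat \<Rightarrow> nat set \<Rightarrow> (nat \<Rightarrow> int) \<Rightarrow> (nat \<Rightarrow> int)" where
  "y0 p f J c = (\<lambda>t.
     if t \<in> J \<and> prv f t \<in> J then c t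
     else if t \<in> J \<and> prv f t \<notin> J then c t + 1
     else if t \<notin> J \<and> prv f t \<in> J then int p - c t
     else int p - 1 - c t)"

fun yseq :: "nat \<Rightarrow> nat \<Rightarrow> nat set \<Rightarrow> (nat \<Rightarrow> int) \<Rightarrow> nat \<Rightarrow> nat \<Rightarrow> (nat \<Rightarrow> int)" where
  "yseq p f J c t0 0 = y0 p f J c"
| "yseq p f J c t0 (Suc k) = delta p f J (yseq p f J c t0 k) ((t0 + k) mod f)"

definition rvec :: "nat \<Rightarrow> nat \<Rightarrow> nat set \<Rightarrow> (nat \<Rightarrow> int) \<Rightarrow> nat \<Rightarrow> (nat \<Rightarrow> int)" where
  "rvec p f J c t0 =
     (if \<forall>t<f. 0 < y0 p f J c t then y0 p f J c else yseq p f J c t0 f)"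

end

theory Submission
  imports Defs "HOL-Number_Theory.Cong"
begin

(* Write x^J for the vector tau |-> (-1)^(tau notin J) x_tau, so that the sum in the theorem is
   Omega_{tau, r^J}. Omega is linear, and the carry vector e_{tau o phi} - p e_tau has
   Omega = 0 mod p^f - 1, because p * p^(f-1) = p^f = 1. The vector y_0^J differs from c by the
   carries at the tau notin J, and a delta_J step at tau that actually moves x_tau changes x^J
   by the carry at tau; hence every y_kappa satisfies the congruence.
   For the range: a zero of y_0 sits at some tau_0 notin J. Sweeping along tau_0 o phi^kappa,
   each step settles its entry into [1, p] and adds the sign of the next entry to it, which
   keeps that entry in the window from which the next step settles it; the last carry lands on
   tau_0, whose entry p becomes p or p - 1. *)

definition signed :: "nat set \<Rightarrow> (nat \<Rightarrow> int) \<Rightarrow> nat \<Rightarrow> int" where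
  "signed J x k = sgnJ J k * x k"

definition carry_vec :: "nat \<Rightarrow> nat \<Rightarrow> nat \<Rightarrow> nat \<Rightarrow> int" where
  "carry_vec p f s k = (if k = nxt f s then 1 else 0) - int p * (if k = s then 1 else 0)"

(* The values of x_s from which one delta_J step at s lands in [1, p], shifting x_s by -p if
   s in J and by +p otherwise, so that x^J changes by exactly carry_vec. *)
definition delta_window :: "nat \<Rightarrow> nat set \<Rightarrow> nat \<Rightarrow> int \<Rightarrow> bool" where
  "delta_window p J s v \<longleftrightarrow>
     (if s \<in> J then 1 \<le> v \<and> v \<le> 2 * int p else 1 - int p \<le> v \<and> v \<le> int p)"

lemma mod_if_less_double: "(a::nat) < 2 * f \<Longrightarrow> a mod f = (if a < f then a else a - f)"
  by (simp add: le_mod_geq mod_if)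

lemma rotate_eq_iff:
  fixes t f :: nat
  assumes "t < f" "i < f" "s < f"
  shows "(t + i) mod f = s \<longleftrightarrow> i = (s + f - t) mod f"
  using assms by (auto simp: mod_if_less_double)

lemma rotate_inj:
  fixes t f :: nat
  assumes "t < f" "i < f" "j < f"
  shows "(t + i) mod f = (t + j) mod f \<longleftrightarrow> i = j"
proof -
  have j: "(t + j) mod f < f"
    using assms by simp
  then have "j = ((t + j) mod f + f - t) mod f"
    using rotate_eq_iff[OF assms(1,3) j] by simp
  then show ?thesis
    using rotate_eq_iff[OF assms(1,2) j] by simp
qed

lemma nxt_rotate: "nxt f ((t + k) mod f) = (t + Suc k) mod f"
  unfolding nxt_def by (simp add: mod_Suc_eq)

lemma nxt_eq_iff_prv: "s < f \<Longrightarrow> u < f \<Longrightarrow> s = nxt f u \<longleftrightarrow> u = prv f s"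
  unfolding nxt_def prv_def by (auto simp: mod_if_less_double)

lemma Omega_add: "Omega p f (\<lambda>k. a k + b k) t = Omega p f a t + Omega p f b t"
  unfolding Omega_def by (simp add: algebra_simps sum.distrib)

lemma Omega_diff: "Omega p f (\<lambda>k. a k - b k) t = Omega p f a t - Omega p f b t"
  unfolding Omega_def by (simp add: algebra_simps sum_subtractf)

lemma Omega_mult_left: "Omega p f (\<lambda>k. m * a k) t = m * Omega p f a t"
  unfolding Omega_def by (simp add: algebra_simps sum_distrib_left)

lemma Omega_sum:
  "finite U \<Longrightarrow> Omega p f (\<lambda>k. \<Sum>u\<in>U. w u k) t = (\<Sum>u\<in>U. Omega p f (w u) t)"
  unfolding Omega_def by (simp add: sum_distrib_left sum.swap[of _ U])

lemma Omega_cong: "(\<And>k. k < f \<Longrightarrow> a k = b k) \<Longrightarrow> Omega p f a t = Omega p f b t"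
  unfolding Omega_def by (intro sum.cong) auto

lemma Omega_unit:
  assumes "s < f" "t < f"
  shows "Omega p f (\<lambda>k. if k = s then 1 else 0) t = int p ^ ((s + f - t) mod f)"
proof -
  have "Omega p f (\<lambda>k. if k = s then 1 else 0) t
      = (\<Sum>i<f. if i = (s + f - t) mod f then int p ^ i else 0)"
    unfolding Omega_def using rotate_eq_iff[OF assms(2) _ assms(1)] by (intro sum.cong) auto
  also have "\<dots> = int p ^ ((s + f - t) mod f)"
    using assms by simp
  finally show ?thesis .
qed

lemma Omega_carry_vec_cong:
  assumes "s < f" "t < f"
  shows "[Omega p f (carry_vec p f s) t = 0] (mod int p ^ f - 1)"
proof -
  define e where "e = (s + f - t) mod f"
  have "e < f"
    using assms unfolding e_def by simp
  have nxt_exp: "(nxt f s + f - t) mod f = (if Suc e < f then Suc e else 0)"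
    using assms unfolding e_def nxt_def by (auto simp: mod_if_less_double)
  have "nxt f s < f"
    using assms unfolding nxt_def by simp
  have Omega_eq: "Omega p f (carry_vec p f s) t
      = int p ^ (if Suc e < f then Suc e else 0) - int p * int p ^ e"
    unfolding carry_vec_def Omega_diff Omega_mult_left Omega_unit[OF assms]
      Omega_unit[OF \<open>nxt f s < f\<close> assms(2)] nxt_exp e_def[symmetric] ..
  show ?thesis
  proof (cases "Suc e < f")
    case True
    then show ?thesis
      unfolding Omega_eq by simp
  next
    case False
    with \<open>e < f\<close> have "int p * int p ^ e = int p ^ f"
      by (metis Suc_lessI power_Suc)
    then have "Omega p f (carry_vec p f s) t = - (int p ^ f - 1)"
      unfolding Omega_eq using False by simp
    then show ?thesis
      unfolding cong_0_iff by (simp only: dvd_minus_iff dvd_refl)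
  qed
qed

lemma signed_y0:
  assumes "s < f"
  shows "signed J (y0 p f J c) s = c s + (\<Sum>u | u < f \<and> u \<notin> J. carry_vec p f u s)"
proof -
  define U where "U = {u. u < f \<and> u \<notin> J}"
  have "finite U"
    unfolding U_def by simp
  have "(\<Sum>u\<in>U. carry_vec p f u s)
      = (\<Sum>u\<in>U. if u = prv f s then 1 else 0) - (\<Sum>u\<in>U. if u = s then int p else 0)"
    unfolding carry_vec_def sum_subtractf using nxt_eq_iff_prv[OF assms]
    by (intro arg_cong2[where f = "(-)"] sum.cong) (auto simp: U_def)
  also have "\<dots> = (if prv f s \<in> U then 1 else 0) - (if s \<in> U then int p else 0)"
    using \<open>finite U\<close> by (simp add: sum.delta')
  finally show ?thesis
    using assms unfolding U_def signed_def y0_def sgnJ_def prv_def by auto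
qed

lemma Omega_signed_y0_cong:
  assumes "t < f"
  shows "[Omega p f (signed J (y0 p f J c)) t = Omega p f c t] (mod int p ^ f - 1)"
proof -
  let ?U = "{u. u < f \<and> u \<notin> J}"
  have "Omega p f (signed J (y0 p f J c)) t
      = Omega p f (\<lambda>k. c k + (\<Sum>u\<in>?U. carry_vec p f u k)) t"
    by (rule Omega_cong) (simp add: signed_y0)
  also have "\<dots> = Omega p f c t + (\<Sum>u\<in>?U. Omega p f (carry_vec p f u) t)"
    by (simp add: Omega_add Omega_sum)
  also have "[\<dots> = Omega p f c t + 0] (mod int p ^ f - 1)"
    using assms by (intro cong_add cong_refl cong_sum[where g = "\<lambda>_. 0", simplified])
      (auto intro: Omega_carry_vec_cong)
  finally show ?thesis
    by simp
qed

lemma signed_delta: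
  assumes "delta_window p J s (x s)" "\<not> (1 \<le> x s \<and> x s \<le> int p)"
  shows "signed J (delta p f J x s) = (\<lambda>k. signed J x k + carry_vec p f s k)"
proof
  fix k
  define shift where "shift = (if x s \<le> 0 then int p else - int p)"
  have shift: "sgnJ J s * shift = - int p"
    using assms unfolding shift_def sgnJ_def delta_window_def by auto
  have sgn_sq: "sgnJ J k * sgnJ J k = 1"
    unfolding sgnJ_def by simp
  have "signed J (delta p f J x s) k = sgnJ J k * x k
      + (if k = s then sgnJ J s * shift else 0) + (if k = nxt f s then sgnJ J k * sgnJ J k else 0)"
    unfolding signed_def delta_def if_not_P[OF assms(2)] shift_def by (simp add: algebra_simps)
  then show "signed J (delta p f J x s) k = signed J x k + carry_vec p f s k"
    unfolding shift sgn_sq signed_def carry_vec_def by simp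
qed

lemma Omega_signed_delta_cong:
  assumes "s < f" "t < f" "delta_window p J s (x s)"
  shows "[Omega p f (signed J (delta p f J x s)) t = Omega p f (signed J x) t] (mod int p ^ f - 1)"
proof (cases "1 \<le> x s \<and> x s \<le> int p")
  case True
  then show ?thesis
    unfolding delta_def by simp
next
  case False
  have "Omega p f (signed J (delta p f J x s)) t
      = Omega p f (signed J x) t + Omega p f (carry_vec p f s) t"
    unfolding signed_delta[where x = x and s = s and f = f, OF assms(3) False] Omega_add ..
  also have "[\<dots> = Omega p f (signed J x) t + 0] (mod int p ^ f - 1)"
    by (intro cong_add cong_refl Omega_carry_vec_cong assms(1,2))
  finally show ?thesis
    by simp
qed

lemma yseq_cong:
  assumes "t < f"
    and "\<forall>k<n. delta_window p J ((t0 + k) mod f) (yseq p f J c t0 k ((t0 + k) mod f))"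
  shows "[Omega p f (signed J (yseq p f J c t0 n)) t = Omega p f c t] (mod int p ^ f - 1)"
  using assms(2)
proof (induction n)
  case 0
  show ?case
    using Omega_signed_y0_cong[OF assms(1)] by simp
next
  case (Suc n)
  have "(t0 + n) mod f < f"
    using assms(1) by simp
  then have "[Omega p f (signed J (yseq p f J c t0 (Suc n))) t
      = Omega p f (signed J (yseq p f J c t0 n)) t] (mod int p ^ f - 1)"
    using Suc.prems assms(1) by (simp add: Omega_signed_delta_cong)
  also have "[Omega p f (signed J (yseq p f J c t0 n)) t = Omega p f c t] (mod int p ^ f - 1)"
    using Suc by simp
  finally show ?case .
qed

lemma delta_other: "k \<noteq> s \<Longrightarrow> k \<noteq> nxt f s \<Longrightarrow> delta p f J x s k = x k"
  unfolding delta_def by simp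

lemma delta_self_range:
  assumes "delta_window p J s (x s)" "nxt f s \<noteq> s"
  shows "1 \<le> delta p f J x s s \<and> delta p f J x s s \<le> int p"
  using assms unfolding delta_def delta_window_def by (auto split: if_splits)

lemma delta_self_zero: "x s = 0 \<Longrightarrow> nxt f s \<noteq> s \<Longrightarrow> delta p f J x s s = int p"
  unfolding delta_def by simp

lemma delta_nxt:
  assumes "nxt f s \<noteq> s"
  shows "delta p f J x s (nxt f s) = x (nxt f s)
    \<or> delta p f J x s (nxt f s) = x (nxt f s) + sgnJ J (nxt f s)"
  using assms unfolding delta_def by simp

lemma y0_range:
  assumes "1 \<le> c s" "c s \<le> int p - 1"
  shows "if s \<in> J then 1 \<le> y0 p f J c s \<and> y0 p f J c s \<le> int p
         else 0 \<le> y0 p f J c s \<and> y0 p f J c s \<le> int p - 1"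
  using assms unfolding y0_def by auto

lemma delta_window_y0_plus_carry:
  assumes "2 \<le> p" "1 \<le> c s" "c s \<le> int p - 1" "e = 0 \<or> e = sgnJ J s"
  shows "delta_window p J s (y0 p f J c s + e)"
  using assms y0_range[of c s p J f] unfolding delta_window_def sgnJ_def
  by (auto split: if_splits)

locale carry_sweep =
  fixes p f :: nat and J :: "nat set" and c :: "nat \<Rightarrow> int" and t0 :: nat
  assumes two_le_p: "2 \<le> p"
    and t0_less: "t0 < f"
    and c_range: "\<forall>t<f. 1 \<le> c t \<and> c t \<le> int p - 1"
    and y0_t0: "y0 p f J c t0 = 0"
begin

abbreviation pos :: "nat \<Rightarrow> nat" where
  "pos j \<equiv> (t0 + j) mod f"

abbreviation y :: "nat \<Rightarrow> nat \<Rightarrow> int" where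
  "y k \<equiv> yseq p f J c t0 k"

lemma pos_less: "pos j < f"
  using t0_less by simp

lemma pos_eq_iff: "i < f \<Longrightarrow> j < f \<Longrightarrow> pos i = pos j \<longleftrightarrow> i = j"
  using rotate_inj t0_less by blast

lemma pos_0: "pos 0 = t0"
  using t0_less by simp

lemma t0_notin_J: "t0 \<notin> J"
  using y0_range[of c t0 p J f] c_range t0_less y0_t0 by auto

lemma delta_window_pos:
  "e = 0 \<or> e = sgnJ J (pos j) \<Longrightarrow> delta_window p J (pos j) (y0 p f J c (pos j) + e)"
  using delta_window_y0_plus_carry two_le_p c_range pos_less by blast

definition sweep_inv :: "nat \<Rightarrow> bool" where
  "sweep_inv k \<longleftrightarrow>
     (0 < k \<longrightarrow> y k t0 = int p) \<and>
     (\<forall>j. 0 < j \<and> j < k \<longrightarrow> 1 \<le> y k (pos j) \<and> y k (pos j) \<le> int p) \<and>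
     (\<exists>e. (e = 0 \<or> e = sgnJ J (pos k)) \<and> y k (pos k) = y0 p f J c (pos k) + e) \<and>
     (\<forall>j. k < j \<and> j < f \<longrightarrow> y k (pos j) = y0 p f J c (pos j))"

lemma sweep_inv_0: "sweep_inv 0"
  unfolding sweep_inv_def by auto

lemma sweep_inv_Suc:
  assumes "Suc k < f" and inv: "sweep_inv k"
  shows "sweep_inv (Suc k)"
proof -
  obtain e where e: "e = 0 \<or> e = sgnJ J (pos k)" and y_k: "y k (pos k) = y0 p f J c (pos k) + e"
    using inv unfolding sweep_inv_def by blast
  have window: "delta_window p J (pos k) (y k (pos k))"
    using delta_window_pos[OF e] y_k by simp
  have nxt_pos: "nxt f (pos k) = pos (Suc k)"
    by (rule nxt_rotate)
  have moves: "nxt f (pos k) \<noteq> pos k"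
    using nxt_pos pos_eq_iff[of "Suc k" k] assms(1) by simp
  have unchanged: "y (Suc k) (pos j) = y k (pos j)" if "j < f" "j \<noteq> k" "j \<noteq> Suc k" for j
    using delta_other[of "pos j" "pos k" f p J "y k"] pos_eq_iff[of j k] pos_eq_iff[of j "Suc k"]
      nxt_pos that assms(1) by simp
  have at_t0: "y (Suc k) t0 = int p"
  proof (cases "k = 0")
    case True
    then show ?thesis
      using delta_self_zero[OF _ moves] y0_t0 pos_0 by simp
  next
    case False
    then show ?thesis
      using unchanged[of 0] inv assms(1) pos_0 unfolding sweep_inv_def by simp
  qed
  have settled: "1 \<le> y (Suc k) (pos k) \<and> y (Suc k) (pos k) \<le> int p"
    using delta_self_range[where x = "y k", OF window moves] by simp
  have "y k (pos (Suc k)) = y0 p f J c (pos (Suc k))"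
    using inv assms(1) lessI[of k] unfolding sweep_inv_def by blast
  then have carried: "\<exists>e. (e = 0 \<or> e = sgnJ J (pos (Suc k)))
      \<and> y (Suc k) (pos (Suc k)) = y0 p f J c (pos (Suc k)) + e"
    using delta_nxt[OF moves, of p J "y k"] nxt_pos by auto
  have below: "1 \<le> y (Suc k) (pos j) \<and> y (Suc k) (pos j) \<le> int p" if "0 < j" "j < Suc k" for j
  proof (cases "j = k")
    case True
    then show ?thesis
      using settled by simp
  next
    case False
    then show ?thesis
      using that unchanged[of j] inv assms(1) unfolding sweep_inv_def by simp
  qed
  have above: "y (Suc k) (pos j) = y0 p f J c (pos j)" if "Suc k < j" "j < f" for j
    using that unchanged[of j] inv unfolding sweep_inv_def by simp
  show ?thesis
    unfolding sweep_inv_def using at_t0 below carried above by blast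
qed

lemma sweep_inv: "k < f \<Longrightarrow> sweep_inv k"
  by (induction k) (auto intro: sweep_inv_0 sweep_inv_Suc)

lemma delta_window_yseq:
  assumes "k < f"
  shows "delta_window p J (pos k) (y k (pos k))"
proof -
  obtain e where "e = 0 \<or> e = sgnJ J (pos k)" "y k (pos k) = y0 p f J c (pos k) + e"
    using sweep_inv[OF assms] unfolding sweep_inv_def by blast
  then show ?thesis
    using delta_window_pos by simp
qed

(* For f = 1 both changes made by delta_J fall on the same entry. *)
lemma yseq_range_single:
  assumes "f = 1"
  shows "1 \<le> y f t0 \<and> y f t0 \<le> int p"
proof -
  have "t0 = 0" "nxt f t0 = t0"
    using assms t0_less unfolding nxt_def by auto
  then have "y f t0 = int p - 1"
    using assms y0_t0 t0_notin_J by (simp add: delta_def sgnJ_def)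
  then show ?thesis
    using two_le_p by simp
qed

lemma yseq_range:
  assumes "s < f"
  shows "1 \<le> y f s \<and> y f s \<le> int p"
proof (cases "f = 1")
  case True
  then show ?thesis
    using assms t0_less yseq_range_single by simp
next
  case False
  define k where "k = f - 1"
  have f: "f = Suc k" "0 < k"
    using False t0_less unfolding k_def by auto
  have inv: "sweep_inv k"
    using sweep_inv f by simp
  have nxt_pos: "nxt f (pos k) = t0"
    using nxt_rotate[of f t0 k] t0_less by (simp only: f(1)[symmetric] mod_add_self2 mod_less)
  have moves: "nxt f (pos k) \<noteq> pos k"
    using nxt_pos pos_0 pos_eq_iff[of 0 k] f by simp
  have y_f: "y f = delta p f J (y k) (pos k)"
    using f by simp
  define j where "j = (s + f - t0) mod f"
  have j: "j < f" "s = pos j"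
    using assms t0_less rotate_eq_iff[OF t0_less _ assms, of j] unfolding j_def by simp_all
  consider "j = k" | "j = 0" | "0 < j" "j < k"
    using j f by linarith
  then show ?thesis
  proof cases
    case 1
    then show ?thesis
      using delta_self_range[where x = "y k", OF delta_window_yseq moves] j y_f f by simp
  next
    case 2
    have "y k t0 = int p"
      using inv f unfolding sweep_inv_def by simp
    then show ?thesis
      using delta_nxt[OF moves, of p J "y k"] nxt_pos y_f j 2 pos_0 t0_notin_J two_le_p
      unfolding sgnJ_def by auto
  next
    case 3
    then have "y f s = y k (pos j)"
      using y_f j nxt_pos pos_0 pos_eq_iff[of j k] pos_eq_iff[of j 0] f delta_other by simp
    then show ?thesis
      using inv 3 unfolding sweep_inv_def by simp
  qed
qed

end

lemma sum_rotate_eq_Omega_signed: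
  "(\<Sum>i<f. sgnJ J ((t + i) mod f) * r ((t + i) mod f) * int p ^ i) = Omega p f (signed J r) t"
  unfolding Omega_def signed_def by (simp add: mult_ac)

theorem lemma5p6:
  fixes p f :: nat and J :: "nat set" and c :: "nat \<Rightarrow> int" and t0 :: nat
  assumes "prime p" and "1 \<le> f"
    and "J \<subseteq> {0..<f}"
    and "\<forall>t<f. 1 \<le> c t \<and> c t \<le> int p - 1"
    and "t0 < f"
    and "(\<forall>t<f. 0 < y0 p f J c t) \<or> y0 p f J c t0 = 0"
  shows "(\<forall>t<f. 1 \<le> rvec p f J c t0 t \<and> rvec p f J c t0 t \<le> int p)
    \<and> (\<forall>t<f. (\<Sum>i<f. sgnJ J ((t + i) mod f) * rvec p f J c t0 ((t + i) mod f) * int p ^ i)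
               mod (int p ^ f - 1) = Omega p f c t mod (int p ^ f - 1))"
proof -
  let ?r = "rvec p f J c t0"
  have "2 \<le> p"
    using assms(1) by (rule prime_ge_2_nat)
  have "(\<forall>t<f. 1 \<le> ?r t \<and> ?r t \<le> int p)
      \<and> (\<forall>t<f. [Omega p f (signed J ?r) t = Omega p f c t] (mod int p ^ f - 1))"
  proof (cases "\<forall>t<f. 0 < y0 p f J c t")
    case True
    then have "?r = y0 p f J c"
      unfolding rvec_def by simp
    moreover have "y0 p f J c t \<le> int p" if "t < f" for t
      using y0_range[of c t p J f] assms(4) that by (auto split: if_splits)
    ultimately show ?thesis
      using True Omega_signed_y0_cong by auto
  next
    case False
    then interpret carry_sweep p f J c t0
      using assms(4-6) \<open>2 \<le> p\<close> by unfold_locales auto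
    have "?r = yseq p f J c t0 f"
      unfolding rvec_def if_not_P[OF False] ..
    then show ?thesis
      using yseq_range yseq_cong delta_window_yseq by simp
  qed
  then show ?thesis
    unfolding sum_rotate_eq_Omega_signed cong_def by blast
qed

end
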